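(* Let $h:\mathbb{R}\to\mathbb{R}$ be any of the following functions: the sigmoid $h(x)=1/(1+e^{-x})$; $h=\tanh$; $h=\arctan$; the quadratic $h(x)=x^2$; or $h(x)=\lambda x$ for $x\ge0$ and $h(x)=\lambda\alpha(e^x-1)$ for $x<0$, with $\alpha>0$ and either $\lambda=1$ (ELU) or $\lambda>1$ (SELU). Then: (i) there exist $v_1,v_2,v_3,v_4\in\mathbb{R}$ with $h(v_1)h(v_4)=h(v_2)h(v_3)$ and $h(v_1)h\!\left(\frac{v_3+v_4}{2}\right)\ne h(v_3)h\!\left(\frac{v_1+v_2}{2}\right)$; and (ii) there exist $v_1,v_2,u_1,u_2\in\mathbb{R}$ such that $u_1h(v_1)+u_2h(v_2)=\tfrac13$; $h$ is infinitely differentiable at $v_1$ and $v_2$; there is $c>0$ with $|h^{(n)}(v_1)|\le c^nn!$ and $|h^{(n)}(v_2)|\le c^nn!$ for all $n\ge1$; $(u_1h'(v_1))^2+\frac{u_1h''(v_1)}{3}>0$; and $(u_1h'(v_1)u_2h'(v_2))^2<\big((u_1h'(v_1))^2+\frac{u_1h''(v_1)}{3}\big)\big((u_2h'(v_2))^2+\frac{u_2h''(v_2)}{3}\big)$. Consequently, for each such $h$, the one-hidden-layer network risk $\ell((W_j,b_j)_{j=1}^2)=\tfrac12\|W_2h(W_1X+b_1\mathbf{1}_3^T)+b_2\mathbf{1}_3^T-Y\|_F^2$ with $W_1\in\mathbb{R}^{2\times2}$, $b_1\in\mathbb{R}^2$, $W_2\in\mathbb{R}^{1\times2}$, $b_2\in\mathbb{R}$,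 $X=\begin{bmatrix}1&0&\frac12\\0&1&\frac12\end{bmatrix}$, $Y=[0\ 0\ 1]$, has a global minimum with value $0$ and a local minimum with value $\tfrac13$.
   Context: $h^{(n)}$ denotes the $n$-th derivative of $h$; $\mathbf{1}_3$ is the all-ones vector in $\mathbb{R}^3$; $h$ is applied entrywise. *)

theory Defs
  imports "HOL-Analysis.Analysis"
begin

definition sigmoid :: "real \<Rightarrow> real" where
  "sigmoid x = 1 / (1 + exp (- x))"

text \<open>ELU (lam = 1) / SELU (lam > 1) with parameter alpha > 0.\<close>
definition elu :: "real \<Rightarrow> real \<Rightarrow> real \<Rightarrow> real" where
  "elu lam alpha x = (if x \<ge> 0 then lam * x else lam * alpha * (exp x - 1))"

definition Xdata :: "real^3^2" where
  "Xdata = (\<chi> i j. if j = 3 then 1/2 else if i = 1 then (if j = 1 then 1 else 0)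
                                          else (if j = 2 then 1 else 0))"

definition Ydata :: "real^3^1" where
  "Ydata = (\<chi> i j. if j = 3 then 1 else 0)"

text \<open>Risk of the one-hidden-layer network; h applied entrywise; Frobenius norm
  (the norm on real^3^1 is the Frobenius norm).\<close>
definition risk :: "(real \<Rightarrow> real) \<Rightarrow> real^2^2 \<Rightarrow> real^2 \<Rightarrow> real^2^1 \<Rightarrow> real \<Rightarrow> real" where
  "risk h W1 b1 W2 b2 =
     (1/2) * (norm (W2 ** (\<chi> i j. h ((W1 ** Xdata) $ i $ j + b1 $ i))
                  + (\<chi> i j. b2) - Ydata))\<^sup>2"

definition riskp :: "(real \<Rightarrow> real) \<Rightarrow> (real^2^2) \<times> (real^2) \<times> (real^2^1) \<times> real \<Rightarrow> real" where
  "riskp h p = risk h (fst p) (fst (snd p)) (fst (snd (snd p))) (snd (snd (snd p)))"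

definition inf_diff_at :: "(real \<Rightarrow> real) \<Rightarrow> real \<Rightarrow> bool" where
  "inf_diff_at h v \<longleftrightarrow> (\<forall>n. \<forall>\<^sub>F x in nhds v. ((deriv ^^ n) h) field_differentiable (at x))"

end

theory Submission
  imports Defs "HOL-Complex_Analysis.Cauchy_Integral_Formula"
begin

text \<open>
  The risk is half the sum of the squared residuals o1, o2, o3 - 1 of the network outputs at the
  three data points, the third of which is the midpoint of the other two. If the second difference
  h 0 + h (-2) - 2 h (-1) is nonzero, the weights can be chosen to fit the data exactly. If h is
  convex on the negative reals, then near the parameter with all hidden pre-activations equal to -1
  and positive output weights, convexity gives o1 + o2 - 2 o3 \<ge> 0, and then
  6 (o1^2 + o2^2 + (o3 - 1)^2) \<ge> (o1 + o2 - 2 (o3 - 1))^2 \<ge> 4, so this parameter, where the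
  risk is 1/3, is a local minimum.

  Part (ii) is witnessed by v1 = v2 = v for a single point v with h'(v)^2 + h(v) h''(v) > 0, the
  weight 1/(3 h(v)) being split into two parts u1, u2 of suitable signs. The factorial bounds on
  the derivatives at v follow from Cauchy's inequality for a holomorphic extension of h.
\<close>

section \<open>Derivatives of a real function with a holomorphic extension\<close>

lemma complex_of_real_in_ball_iff [simp]:
  "complex_of_real x \<in> ball (complex_of_real v) r \<longleftrightarrow> x \<in> ball v r"
  by (simp add: dist_norm flip: of_real_diff)

lemma real_derivative_of_holomorphic_extension:
  fixes G :: "complex \<Rightarrow> complex" and g :: "real \<Rightarrow> real"
  assumes holo: "G holomorphic_on ball (of_real v) r"
    and extends: "\<And>x. x \<in> ball v r \<Longrightarrow> G (of_real x) = of_real (g x)"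
    and x: "x \<in> ball v r"
  shows "(g has_real_derivative Re (deriv G (of_real x))) (at x)"
    and "deriv G (of_real x) = of_real (Re (deriv G (of_real x)))"
proof -
  define G' where "G' = deriv G (of_real x)"
  have "(G has_field_derivative G') (at (of_real x))"
    unfolding G'_def using holomorphic_derivI[OF holo open_ball] x by simp
  then have "((\<lambda>t. G (of_real t)) has_vector_derivative G') (at x)"
    by (rule has_vector_derivative_real_field)
  then have re: "((\<lambda>t. Re (G (of_real t))) has_field_derivative Re G') (at x)"
    and im: "((\<lambda>t. Im (G (of_real t))) has_field_derivative Im G') (at x)"
    by (auto simp: has_vector_derivative_complex_iff)
  show "(g has_real_derivative Re (deriv G (of_real x))) (at x)"
    unfolding G'_def[symmetric]
    by (rule has_field_derivative_transform_within_open[OF re open_ball x]) (simp add: extends)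
  have "((\<lambda>t. 0::real) has_field_derivative Im G') (at x)"
    by (rule has_field_derivative_transform_within_open[OF im open_ball x]) (simp add: extends)
  then have "Im G' = 0"
    using DERIV_unique DERIV_const by blast
  then show "deriv G (of_real x) = of_real (Re (deriv G (of_real x)))"
    unfolding G'_def[symmetric] by (simp add: complex_eq_iff)
qed

lemma higher_deriv_of_holomorphic_extension:
  fixes F :: "complex \<Rightarrow> complex" and h :: "real \<Rightarrow> real"
  assumes holo: "F holomorphic_on ball (of_real v) r"
    and extends: "\<And>x. x \<in> ball v r \<Longrightarrow> F (of_real x) = of_real (h x)"
    and x: "x \<in> ball v r"
  shows "(deriv ^^ n) F (of_real x) = of_real ((deriv ^^ n) h x)"
  using x
proof (induction n arbitrary: x)
  case 0
  then show ?case using extends by simp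
next
  case (Suc n)
  have "(deriv ^^ n) F holomorphic_on ball (of_real v) r"
    by (rule holomorphic_higher_deriv[OF holo]) simp
  from real_derivative_of_holomorphic_extension[OF this Suc.IH Suc.prems]
  show ?case
    by (simp add: DERIV_imp_deriv)
qed

definition has_holomorphic_extension_at :: "(real \<Rightarrow> real) \<Rightarrow> real \<Rightarrow> bool" where
  "has_holomorphic_extension_at h v \<longleftrightarrow> (\<exists>F r. r > 0 \<and> F holomorphic_on ball (of_real v) r \<and>
     (\<forall>x \<in> ball v r. F (of_real x) = of_real (h x)))"

lemma has_holomorphic_extension_atI:
  assumes "F holomorphic_on ball (of_real v) r" "r > 0"
    and "\<And>x. x \<in> ball v r \<Longrightarrow> F (of_real x) = of_real (h x)"
  shows "has_holomorphic_extension_at h v"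
  using assms unfolding has_holomorphic_extension_at_def by blast

lemma inf_diff_at_of_holomorphic_extension:
  assumes "has_holomorphic_extension_at h v"
  shows "inf_diff_at h v"
proof -
  obtain F r where "r > 0" and holo: "F holomorphic_on ball (of_real v) r"
    and extends: "\<And>x. x \<in> ball v r \<Longrightarrow> F (of_real x) = of_real (h x)"
    using assms unfolding has_holomorphic_extension_at_def by blast
  show ?thesis
    unfolding inf_diff_at_def
  proof
    fix n
    have holo_n: "(deriv ^^ n) F holomorphic_on ball (of_real v) r"
      by (rule holomorphic_higher_deriv[OF holo]) simp
    have "(deriv ^^ n) h field_differentiable (at x)" if "x \<in> ball v r" for x
      using real_derivative_of_holomorphic_extension(1)
        [OF holo_n higher_deriv_of_holomorphic_extension[OF holo extends] that]
      unfolding field_differentiable_def by blast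
    moreover have "\<forall>\<^sub>F x in nhds v. x \<in> ball v r"
      using \<open>r > 0\<close> by (intro eventually_nhds_in_open) auto
    ultimately show "\<forall>\<^sub>F x in nhds v. (deriv ^^ n) h field_differentiable at x"
      by (auto elim: eventually_mono)
  qed
qed

lemma higher_deriv_bound_of_holomorphic_extension:
  assumes "has_holomorphic_extension_at h v"
  shows "\<exists>c>0. \<forall>n\<ge>1. \<bar>(deriv ^^ n) h v\<bar> \<le> c ^ n * fact n"
proof -
  obtain F r where r: "r > 0" and holo: "F holomorphic_on ball (of_real v) r"
    and extends: "\<And>x. x \<in> ball v r \<Longrightarrow> F (of_real x) = of_real (h x)"
    using assms unfolding has_holomorphic_extension_at_def by blast
  define \<xi> where "\<xi> = complex_of_real v"
  have sub: "cball \<xi> (r/2) \<subseteq> ball \<xi> r"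
    using r by auto
  have cont: "continuous_on (cball \<xi> (r/2)) F"
    using holomorphic_on_imp_continuous_on[OF holo] sub unfolding \<xi>_def
    by (rule continuous_on_subset)
  obtain B where B: "\<And>z. z \<in> cball \<xi> (r/2) \<Longrightarrow> norm (F z) \<le> B" and "B \<ge> 1"
  proof -
    have "bounded (F ` cball \<xi> (r/2))"
      by (rule compact_imp_bounded[OF compact_continuous_image[OF cont compact_cball]])
    then obtain B where "\<And>z. z \<in> cball \<xi> (r/2) \<Longrightarrow> norm (F z) \<le> B"
      unfolding bounded_iff by blast
    then show thesis
      by (intro that[of "max B 1"]) (auto simp: le_max_iff_disj)
  qed
  have holo': "F holomorphic_on ball \<xi> (r/2)"
    using holomorphic_on_subset[OF holo] sub ball_subset_cball unfolding \<xi>_def by blast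
  show ?thesis
  proof (intro exI[of _ "B / (r/2)"] conjI allI impI)
    show "B / (r/2) > 0"
      using r \<open>B \<ge> 1\<close> by simp
    fix n :: nat
    assume n: "n \<ge> 1"
    have "\<bar>(deriv ^^ n) h v\<bar> = norm ((deriv ^^ n) F \<xi>)"
      using higher_deriv_of_holomorphic_extension[OF holo extends, of v n] r
      unfolding \<xi>_def by simp
    also have "\<dots> \<le> fact n * B / (r/2) ^ n"
      by (rule Cauchy_inequality[OF holo' cont]) (use r B in \<open>auto simp: dist_norm\<close>)
    also have "\<dots> \<le> fact n * B ^ n / (r/2) ^ n"
      using power_increasing[of 1 n B] r \<open>B \<ge> 1\<close> n
      by (intro divide_right_mono mult_left_mono) auto
    also have "\<dots> = (B / (r/2)) ^ n * fact n"
      by (simp add: power_divide)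
    finally show "\<bar>(deriv ^^ n) h v\<bar> \<le> (B / (r/2)) ^ n * fact n" .
  qed
qed

lemma Re_exp_pos:
  fixes z :: complex
  assumes "\<bar>Im z\<bar> < pi / 2"
  shows "Re (exp z) > 0"
  using cos_gt_zero_pi[of "Im z"] assms by (simp add: Re_exp)

lemma abs_Im_less_of_mem_ball:
  fixes z :: complex
  assumes "z \<in> ball (of_real v) r"
  shows "\<bar>Im z\<bar> < r"
proof -
  have "\<bar>Im (z - of_real v)\<bar> \<le> cmod (z - of_real v)"
    by (rule abs_Im_le_cmod)
  with assms show ?thesis
    by (simp add: dist_norm norm_minus_commute)
qed

lemma second_order_weights:
  fixes a d s :: real
  assumes a: "a \<noteq> 0" and s: "s \<noteq> 0" and curvature: "d\<^sup>2 + a * s > 0"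
  shows "\<exists>u1 u2. u1 * a + u2 * a = 1/3 \<and> (u1 * d)\<^sup>2 + u1 * s / 3 > 0 \<and>
        (u1 * d * u2 * d)\<^sup>2 < ((u1 * d)\<^sup>2 + u1 * s / 3) * ((u2 * d)\<^sup>2 + u2 * s / 3)"
proof -
  define m where "m = 1 / (3 * a)"
  have ma: "m * a = 1/3"
    unfolding m_def using a by simp
  have "m \<noteq> 0"
    using ma by auto
  then have mm: "m * m > 0"
    by (cases "m > 0") (auto intro: mult_neg_neg)
  text \<open>u1 gets the sign of s, and u2 = m - u1 the sign of m.\<close>
  obtain u1 where u1s: "u1 * s > 0" and u2m: "(m - u1) * m > 0"
  proof (cases "m * s > 0")
    case True
    show thesis
      by (rule that[of "m / 2"]) (use True mm in simp_all)
  next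
    case False
    then have "m * s < 0"
      using \<open>m \<noteq> 0\<close> s by (metis linorder_neqE_linordered_idom mult_eq_0_iff)
    then show thesis
      by (intro that[of "- m"]) (use mm in simp_all)
  qed
  define u2 where "u2 = m - u1"
  have "((u1 * d)\<^sup>2 + u1 * s / 3) * ((u2 * d)\<^sup>2 + u2 * s / 3) - (u1 * d * u2 * d)\<^sup>2
      = u1 * u2 * (s / 3) * (d\<^sup>2 * (u1 + u2) + s / 3)"
    by (simp add: power2_eq_square algebra_simps)
  also have "u1 + u2 = m"
    unfolding u2_def by simp
  also have "d\<^sup>2 * m + s / 3 = m * (d\<^sup>2 + a * s)"
    using ma by (simp add: algebra_simps)
  also have "u1 * u2 * (s / 3) * (m * (d\<^sup>2 + a * s)) = (u1 * s) * (u2 * m) * (d\<^sup>2 + a * s) / 3"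
    by simp
  also have "\<dots> > 0"
    using u1s u2m curvature unfolding u2_def by simp
  finally have "(u1 * d * u2 * d)\<^sup>2 < ((u1 * d)\<^sup>2 + u1 * s / 3) * ((u2 * d)\<^sup>2 + u2 * s / 3)"
    by simp
  moreover have "u1 * a + u2 * a = 1/3"
    unfolding u2_def using ma by (simp add: algebra_simps)
  moreover have "(u1 * d)\<^sup>2 + u1 * s / 3 > 0"
    using u1s by (simp add: add_nonneg_pos)
  ultimately show ?thesis
    by blast
qed

section \<open>The risk landscape\<close>

definition network_output ::
    "(real \<Rightarrow> real) \<Rightarrow> real^2^2 \<Rightarrow> real^2 \<Rightarrow> real^2^1 \<Rightarrow> real \<Rightarrow> real \<Rightarrow> real \<Rightarrow> real" where
  "network_output h W1 b1 W2 b2 x y =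
     W2$1$1 * h (W1$1$1 * x + W1$1$2 * y + b1$1) + W2$1$2 * h (W1$2$1 * x + W1$2$2 * y + b1$2) + b2"

lemma Xdata_Ydata_entries:
  "Xdata$1$1 = 1" "Xdata$1$2 = 0" "Xdata$1$3 = 1/2"
  "Xdata$2$1 = 0" "Xdata$2$2 = 1" "Xdata$2$3 = 1/2"
  "Ydata$1$1 = 0" "Ydata$1$2 = 0" "Ydata$1$3 = 1"
  by (simp_all add: Xdata_def Ydata_def)

lemma risk_eq_residuals:
  "risk h W1 b1 W2 b2 = 1/2 * ((network_output h W1 b1 W2 b2 1 0)\<^sup>2
     + (network_output h W1 b1 W2 b2 0 1)\<^sup>2 + (network_output h W1 b1 W2 b2 (1/2) (1/2) - 1)\<^sup>2)"
proof -
  have norm_sq: "(norm M)\<^sup>2 = (M$1$1)\<^sup>2 + (M$1$2)\<^sup>2 + (M$1$3)\<^sup>2" for M :: "real^3^1"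
    unfolding power2_norm_eq_inner by (simp add: inner_vec_def sum_3 power2_eq_square)
  show ?thesis
    unfolding risk_def norm_sq
    by (simp add: matrix_matrix_mult_def sum_2 Xdata_Ydata_entries network_output_def algebra_simps)
qed

lemma riskp_nonneg: "riskp h p \<ge> 0"
  unfolding riskp_def risk_def by simp

lemma residuals_lower_bound:
  fixes o1 o2 o3 :: real
  assumes "o1 + o2 - 2 * o3 \<ge> 0"
  shows "1/2 * (o1\<^sup>2 + o2\<^sup>2 + (o3 - 1)\<^sup>2) \<ge> 1/3"
proof -
  have "6 * (o1\<^sup>2 + o2\<^sup>2 + (o3 - 1)\<^sup>2) = (o1 + o2 - 2 * (o3 - 1))\<^sup>2
      + (o1 - o2)\<^sup>2 + ((o3 - 1) + 2 * o1)\<^sup>2 + ((o3 - 1) + 2 * o2)\<^sup>2"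
    by (simp add: power2_eq_square algebra_simps)
  moreover have "(o1 + o2 - 2 * (o3 - 1))\<^sup>2 \<ge> 4"
    using power_mono[of 2 "o1 + o2 - 2 * (o3 - 1)" 2] assms by simp
  moreover have "(o1 - o2)\<^sup>2 \<ge> 0" "((o3 - 1) + 2 * o1)\<^sup>2 \<ge> 0" "((o3 - 1) + 2 * o2)\<^sup>2 \<ge> 0"
    by simp_all
  ultimately show ?thesis
    by linarith
qed

lemma riskp_global_minimum:
  assumes second_difference: "h 0 + h (-2) - 2 * h (-1) \<noteq> 0"
  shows "\<exists>p. riskp h p = 0 \<and> (\<forall>q. riskp h p \<le> riskp h q)"
proof -
  define w where "w = 1 / (2 * h (-1) - h 0 - h (-2))"
  define W1 :: "real^2^2" where "W1 = (\<chi> i j. if i = j then 0 else -2)"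
  define W2 :: "real^2^1" where "W2 = (\<chi> i j. w)"
  define b2 where "b2 = - w * (h 0 + h (-2))"
  have W1: "W1$1$1 = 0" "W1$1$2 = -2" "W1$2$1 = -2" "W1$2$2 = 0"
    unfolding W1_def by simp_all
  have "network_output h W1 0 W2 b2 1 0 = 0" "network_output h W1 0 W2 b2 0 1 = 0"
    by (simp_all add: network_output_def W1 W2_def b2_def algebra_simps)
  moreover have "network_output h W1 0 W2 b2 (1/2) (1/2) = w * (2 * h (-1) - h 0 - h (-2))"
    by (simp add: network_output_def W1 W2_def b2_def algebra_simps)
  moreover have "\<dots> = 1"
    using second_difference unfolding w_def by simp
  ultimately have "riskp h (W1, 0, W2, b2) = 0"
    unfolding riskp_def by (simp add: risk_eq_residuals)
  then show ?thesis
    using riskp_nonneg by metis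
qed

lemma convex_on_midpoint:
  fixes h :: "real \<Rightarrow> real"
  assumes "convex_on A h" "a \<in> A" "b \<in> A"
  shows "2 * h ((a + b) / 2) \<le> h a + h b"
  using convex_onD[OF assms(1), of "1/2" a b] assms(2,3) by (simp add: add_divide_distrib)

lemma riskp_ge_one_third:
  assumes convex: "convex_on {..<0} h"
    and negative: "\<And>i j. W1$i$j + b1$i < 0" and positive: "\<And>j. W2$1$j > 0"
  shows "riskp h (W1, b1, W2, b2) \<ge> 1/3"
proof -
  define z where "z i j = W1$i$j + b1$i" for i j
  have "2 * h ((z i 1 + z i 2) / 2) \<le> h (z i 1) + h (z i 2)" for i
    by (rule convex_on_midpoint[OF convex]) (use negative in \<open>simp_all add: z_def\<close>)
  then have mid: "W2$1$i * (2 * h ((z i 1 + z i 2) / 2)) \<le> W2$1$i * (h (z i 1) + h (z i 2))" for i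
    using positive by (simp add: mult_left_mono)
  have outputs: "network_output h W1 b1 W2 b2 1 0 = W2$1$1 * h (z 1 1) + W2$1$2 * h (z 2 1) + b2"
    "network_output h W1 b1 W2 b2 0 1 = W2$1$1 * h (z 1 2) + W2$1$2 * h (z 2 2) + b2"
    "network_output h W1 b1 W2 b2 (1/2) (1/2)
       = W2$1$1 * h ((z 1 1 + z 1 2) / 2) + W2$1$2 * h ((z 2 1 + z 2 2) / 2) + b2"
    by (simp_all add: network_output_def z_def algebra_simps add_divide_distrib)
  have "network_output h W1 b1 W2 b2 1 0 + network_output h W1 b1 W2 b2 0 1
      - 2 * network_output h W1 b1 W2 b2 (1/2) (1/2) \<ge> 0"
    using mid[of 1] mid[of 2] unfolding outputs by (simp add: algebra_simps)
  from residuals_lower_bound[OF this] show ?thesis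
    by (simp add: riskp_def risk_eq_residuals)
qed

lemma riskp_local_minimum:
  assumes convex: "convex_on {..<0} h"
  shows "\<exists>p. riskp h p = 1/3 \<and> (\<forall>\<^sub>F q in nhds p. riskp h p \<le> riskp h q)"
proof -
  define b1 :: "real^2" where "b1 = (\<chi> i. -1)"
  define W2 :: "real^2^1" where "W2 = (\<chi> i j. 1)"
  define p0 where "p0 = (0 :: real^2^2, b1, W2, 1/3 - 2 * h (-1))"
  have val: "riskp h p0 = 1/3"
    unfolding riskp_def p0_def
    by (simp add: risk_eq_residuals network_output_def b1_def W2_def power2_eq_square)
  have negative: "\<forall>\<^sub>F q in nhds p0. \<forall>i j. fst q $ i $ j + fst (snd q) $ i < 0"
  proof (intro eventually_all_finite)
    fix i j
    have "((\<lambda>q. fst q $ i $ j + fst (snd q) $ i) \<longlongrightarrow> fst p0 $ i $ j + fst (snd p0) $ i) (nhds p0)"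
      by (intro tendsto_intros filterlim_ident)
    then have "((\<lambda>q. fst q $ i $ j + fst (snd q) $ i) \<longlongrightarrow> -1) (nhds p0)"
      by (simp add: p0_def b1_def)
    then show "\<forall>\<^sub>F q in nhds p0. fst q $ i $ j + fst (snd q) $ i < 0"
      by (rule order_tendstoD) simp
  qed
  have positive: "\<forall>\<^sub>F q in nhds p0. \<forall>j. fst (snd (snd q)) $ 1 $ j > 0"
  proof (intro eventually_all_finite)
    fix j
    have "((\<lambda>q. fst (snd (snd q)) $ 1 $ j) \<longlongrightarrow> fst (snd (snd p0)) $ 1 $ j) (nhds p0)"
      by (intro tendsto_intros filterlim_ident)
    then have "((\<lambda>q. fst (snd (snd q)) $ 1 $ j) \<longlongrightarrow> 1) (nhds p0)"
      by (simp add: p0_def W2_def)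
    then show "\<forall>\<^sub>F q in nhds p0. fst (snd (snd q)) $ 1 $ j > 0"
      by (rule order_tendstoD) simp
  qed
  have "\<forall>\<^sub>F q in nhds p0. riskp h p0 \<le> riskp h q"
    using negative positive
  proof eventually_elim
    case (elim q)
    obtain W1 b1 W2 b2 where q: "q = (W1, b1, W2, b2)"
      by (cases q)
    have "riskp h (W1, b1, W2, b2) \<ge> 1/3"
      by (rule riskp_ge_one_third[OF convex]) (use elim in \<open>simp_all add: q\<close>)
    then show ?case
      unfolding val q .
  qed
  with val show ?thesis
    by blast
qed

lemma second_order_certificate:
  fixes h :: "real \<Rightarrow> real"
  assumes analytic: "has_holomorphic_extension_at h v"
    and "h v \<noteq> 0" "(deriv ^^ 2) h v \<noteq> 0"
    and "(deriv h v)\<^sup>2 + h v * (deriv ^^ 2) h v > 0"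
  shows "\<exists>v1 v2 u1 u2 :: real.
        u1 * h v1 + u2 * h v2 = 1/3 \<and>
        inf_diff_at h v1 \<and> inf_diff_at h v2 \<and>
        (\<exists>c > 0. \<forall>n \<ge> 1. \<bar>(deriv ^^ n) h v1\<bar> \<le> c ^ n * fact n \<and>
                          \<bar>(deriv ^^ n) h v2\<bar> \<le> c ^ n * fact n) \<and>
        (u1 * deriv h v1)\<^sup>2 + u1 * (deriv ^^ 2) h v1 / 3 > 0 \<and>
        (u1 * deriv h v1 * u2 * deriv h v2)\<^sup>2 <
          ((u1 * deriv h v1)\<^sup>2 + u1 * (deriv ^^ 2) h v1 / 3) *
          ((u2 * deriv h v2)\<^sup>2 + u2 * (deriv ^^ 2) h v2 / 3)"
proof -
  obtain u1 u2 where "u1 * h v + u2 * h v = 1/3"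
    "(u1 * deriv h v)\<^sup>2 + u1 * (deriv ^^ 2) h v / 3 > 0"
    "(u1 * deriv h v * u2 * deriv h v)\<^sup>2 < ((u1 * deriv h v)\<^sup>2 + u1 * (deriv ^^ 2) h v / 3) *
       ((u2 * deriv h v)\<^sup>2 + u2 * (deriv ^^ 2) h v / 3)"
    using second_order_weights assms(2-4) by blast
  with inf_diff_at_of_holomorphic_extension[OF analytic]
    higher_deriv_bound_of_holomorphic_extension[OF analytic]
  show ?thesis
    by (intro exI[of _ v] exI[of _ u1] exI[of _ u2]) auto
qed

lemma network_landscape:
  fixes h :: "real \<Rightarrow> real"
  assumes product_witness: "\<exists>v1 v2 v3 v4 :: real. h v1 * h v4 = h v2 * h v3 \<and>
        h v1 * h ((v3 + v4) / 2) \<noteq> h v3 * h ((v1 + v2) / 2)"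
    and second_difference: "h 0 + h (-2) - 2 * h (-1) \<noteq> 0"
    and convex: "convex_on {..<0} h"
    and "has_holomorphic_extension_at h v"
    and "h v \<noteq> 0" "(deriv ^^ 2) h v \<noteq> 0"
    and "(deriv h v)\<^sup>2 + h v * (deriv ^^ 2) h v > 0"
  shows
    "(\<exists>v1 v2 v3 v4 :: real. h v1 * h v4 = h v2 * h v3 \<and>
        h v1 * h ((v3 + v4) / 2) \<noteq> h v3 * h ((v1 + v2) / 2))
   \<and> (\<exists>v1 v2 u1 u2 :: real.
        u1 * h v1 + u2 * h v2 = 1/3 \<and>
        inf_diff_at h v1 \<and> inf_diff_at h v2 \<and>
        (\<exists>c > 0. \<forall>n \<ge> 1. \<bar>(deriv ^^ n) h v1\<bar> \<le> c ^ n * fact n \<and>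
                          \<bar>(deriv ^^ n) h v2\<bar> \<le> c ^ n * fact n) \<and>
        (u1 * deriv h v1)\<^sup>2 + u1 * (deriv ^^ 2) h v1 / 3 > 0 \<and>
        (u1 * deriv h v1 * u2 * deriv h v2)\<^sup>2 <
          ((u1 * deriv h v1)\<^sup>2 + u1 * (deriv ^^ 2) h v1 / 3) *
          ((u2 * deriv h v2)\<^sup>2 + u2 * (deriv ^^ 2) h v2 / 3))
   \<and> (\<exists>p. riskp h p = 0 \<and> (\<forall>q. riskp h p \<le> riskp h q))
   \<and> (\<exists>p. riskp h p = 1/3 \<and> (\<forall>\<^sub>F q in nhds p. riskp h p \<le> riskp h q))"
  using product_witness second_order_certificate[OF assms(4-7)]
    riskp_global_minimum[OF second_difference] riskp_local_minimum[OF convex]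
  by blast

section \<open>The activation functions\<close>

lemma deriv_funpow_two: "(deriv ^^ 2) f = deriv (deriv f)"
  by (simp add: numeral_2_eq_2)

lemma square_product_witness:
  "\<exists>v1 v2 v3 v4 :: real. v1\<^sup>2 * v4\<^sup>2 = v2\<^sup>2 * v3\<^sup>2 \<and>
     v1\<^sup>2 * ((v3 + v4) / 2)\<^sup>2 \<noteq> v3\<^sup>2 * ((v1 + v2) / 2)\<^sup>2"
  by (rule exI[of _ 1], rule exI[of _ 1], rule exI[of _ "-1"], rule exI[of _ 1]) simp

lemma square_holomorphic_extension: "has_holomorphic_extension_at (\<lambda>x. x\<^sup>2) 1"
  by (rule has_holomorphic_extension_atI[where F="\<lambda>z. z\<^sup>2" and r=1])
    (auto intro: holomorphic_intros)

lemma square_curvature: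
  shows "(1::real)\<^sup>2 \<noteq> 0" and "(deriv ^^ 2) (\<lambda>x::real. x\<^sup>2) 1 \<noteq> 0"
    and "(deriv (\<lambda>x::real. x\<^sup>2) 1)\<^sup>2 + 1\<^sup>2 * (deriv ^^ 2) (\<lambda>x::real. x\<^sup>2) 1 > 0"
proof -
  have deriv: "deriv (\<lambda>x::real. x\<^sup>2) = (\<lambda>x. 2 * x)"
    by (intro ext DERIV_imp_deriv) (auto intro!: derivative_eq_intros)
  have "(deriv ^^ 2) (\<lambda>x::real. x\<^sup>2) 1 = deriv (\<lambda>x. 2 * x) 1"
    unfolding deriv_funpow_two deriv ..
  also have "\<dots> = 2"
    by (rule DERIV_imp_deriv) (auto intro!: derivative_eq_intros)
  finally have "(deriv ^^ 2) (\<lambda>x::real. x\<^sup>2) 1 = 2" .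
  then show "(1::real)\<^sup>2 \<noteq> 0" and "(deriv ^^ 2) (\<lambda>x::real. x\<^sup>2) 1 \<noteq> 0"
    and "(deriv (\<lambda>x::real. x\<^sup>2) 1)\<^sup>2 + 1\<^sup>2 * (deriv ^^ 2) (\<lambda>x::real. x\<^sup>2) 1 > 0"
    by (simp_all add: deriv)
qed

lemma arctan_product_witness:
  "\<exists>v1 v2 v3 v4 :: real. arctan v1 * arctan v4 = arctan v2 * arctan v3 \<and>
     arctan v1 * arctan ((v3 + v4) / 2) \<noteq> arctan v3 * arctan ((v1 + v2) / 2)"
proof (rule exI[of _ 1], rule exI[of _ 0], rule exI[of _ 2], rule exI[of _ 0], intro conjI)
  have half: "arctan (1/2) = pi/2 - arctan (2::real)"
    using arctan_inverse[of "2::real"] by simp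
  have "arctan 1 * arctan 1 - arctan 2 * arctan (1/2) = (arctan 2 - pi/4)\<^sup>2"
    unfolding arctan_one half by (simp add: power2_eq_square algebra_simps)
  moreover have "arctan 2 > pi/4"
    using arctan_less_iff[of 1 2] by (simp add: arctan_one)
  ultimately show "arctan 1 * arctan ((2 + 0) / 2) \<noteq> arctan 2 * arctan ((1 + 0 :: real) / 2)"
    by auto
qed simp

lemma arctan_second_difference: "arctan 0 + arctan (-2) - 2 * arctan (-1) \<noteq> (0::real)"
  using arctan_ubound[of 2] by (simp add: arctan_minus arctan_one)

lemma convex_on_arctan_neg: "convex_on {..<0} arctan"
proof (rule convex_on_realI[where f'="\<lambda>x. inverse (1 + x\<^sup>2)"])
  show "inverse (1 + x\<^sup>2) \<le> inverse (1 + y\<^sup>2)" if "x \<in> {..<0}" "y \<in> {..<0}" "x \<le> y" for x y :: real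
  proof -
    have "(x - y) * (x + y) \<ge> 0"
      using that by (intro mult_nonpos_nonpos) auto
    then have "y\<^sup>2 \<le> x\<^sup>2"
      by (simp add: power2_eq_square algebra_simps)
    then show ?thesis
      by (intro le_imp_inverse_le) (auto simp: add_pos_nonneg)
  qed
qed (auto intro: DERIV_arctan)

lemma arctan_holomorphic_extension: "has_holomorphic_extension_at arctan (1/2)"
proof (rule has_holomorphic_extension_atI[where F=Arctan and r="1/2"])
  show "Arctan holomorphic_on ball (of_real (1/2)) (1/2)"
    by (rule holomorphic_on_Arctan) (use abs_Im_less_of_mem_ball in fastforce)
qed (simp_all add: Arctan_of_real)

lemma arctan_curvature:
  shows "arctan (1/2::real) \<noteq> 0" and "(deriv ^^ 2) arctan (1/2::real) \<noteq> 0"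
    and "(deriv arctan (1/2::real))\<^sup>2 + arctan (1/2) * (deriv ^^ 2) arctan (1/2) > 0"
proof -
  have deriv: "deriv arctan = (\<lambda>x::real. inverse (1 + x\<^sup>2))"
    by (intro ext DERIV_imp_deriv DERIV_arctan)
  have "(deriv ^^ 2) arctan (1/2::real) = deriv (\<lambda>x::real. inverse (1 + x\<^sup>2)) (1/2)"
    unfolding deriv_funpow_two deriv ..
  also have "\<dots> = -16/25"
    by (rule DERIV_imp_deriv) (auto intro!: derivative_eq_intros simp: power2_eq_square)
  finally have second: "(deriv ^^ 2) arctan (1/2::real) = -16/25" .
  have "0 < arctan (1/2::real)" "arctan (1/2::real) \<le> 1/2"
    using arctan_le_self[of "1/2"] by simp_all
  then show "arctan (1/2::real) \<noteq> 0" and "(deriv ^^ 2) arctan (1/2::real) \<noteq> 0"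
    and "(deriv arctan (1/2::real))\<^sup>2 + arctan (1/2) * (deriv ^^ 2) arctan (1/2) > 0"
    by (simp_all add: second deriv power2_eq_square)
qed

lemma elu_neg: "x < 0 \<Longrightarrow> elu lam alpha x = lam * alpha * (exp x - 1)"
  by (simp add: elu_def)

lemma elu_nonneg: "x \<ge> 0 \<Longrightarrow> elu lam alpha x = lam * x"
  by (simp add: elu_def)

lemma has_real_derivative_elu_neg:
  assumes "x < 0"
  shows "(elu lam alpha has_real_derivative lam * alpha * exp x) (at x)"
proof (rule has_field_derivative_transform_within_open[where S="{..<0}"])
  show "((\<lambda>x. lam * alpha * (exp x - 1)) has_real_derivative lam * alpha * exp x) (at x)"
    by (auto intro!: derivative_eq_intros)
qed (use assms elu_neg in auto)

lemma elu_product_witness: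
  assumes "lam \<noteq> 0" "alpha \<noteq> 0"
  shows "\<exists>v1 v2 v3 v4 :: real.
    elu lam alpha v1 * elu lam alpha v4 = elu lam alpha v2 * elu lam alpha v3 \<and>
    elu lam alpha v1 * elu lam alpha ((v3 + v4) / 2) \<noteq> elu lam alpha v3 * elu lam alpha ((v1 + v2) / 2)"
proof (rule exI[of _ 2], rule exI[of _ 0], rule exI[of _ "-2"], rule exI[of _ 0], intro conjI)
  have "elu lam alpha 2 * elu lam alpha (-1) - elu lam alpha (-2) * elu lam alpha 1
      = - (lam * lam * alpha) * (exp (-1) - 1)\<^sup>2"
    by (simp add: elu_neg elu_nonneg power2_eq_square algebra_simps flip: exp_add)
  moreover have "exp (-1::real) \<noteq> 1"
    by simp
  ultimately show "elu lam alpha 2 * elu lam alpha ((-2 + 0) / 2)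
      \<noteq> elu lam alpha (-2) * elu lam alpha ((2 + 0) / 2)"
    using assms by auto
qed (simp add: elu_nonneg)

lemma elu_second_difference:
  assumes "lam * alpha \<noteq> 0"
  shows "elu lam alpha 0 + elu lam alpha (-2) - 2 * elu lam alpha (-1) \<noteq> 0"
proof -
  have "elu lam alpha 0 + elu lam alpha (-2) - 2 * elu lam alpha (-1)
      = lam * alpha * (exp (-1) - 1)\<^sup>2"
    by (simp add: elu_neg elu_nonneg power2_eq_square algebra_simps flip: exp_add)
  then show ?thesis
    using assms by simp
qed

lemma convex_on_elu_neg:
  assumes "lam * alpha \<ge> 0"
  shows "convex_on {..<0} (elu lam alpha)"
  by (rule convex_on_realI[where f'="\<lambda>x. lam * alpha * exp x"])
    (use assms in \<open>auto intro: has_real_derivative_elu_neg mult_left_mono\<close>)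

lemma elu_holomorphic_extension: "has_holomorphic_extension_at (elu lam alpha) (-1/4)"
proof (rule has_holomorphic_extension_atI[where F="\<lambda>z. of_real (lam * alpha) * (exp z - 1)"
      and r="1/4"])
  show "of_real (lam * alpha) * (exp (of_real x) - 1) = of_real (elu lam alpha x)"
    if "x \<in> ball (-1/4) (1/4)" for x
  proof -
    have "x < 0"
      using that by (simp add: dist_real_def abs_if split: if_splits)
    then show ?thesis
      by (simp add: elu_neg exp_of_real)
  qed
  show "(\<lambda>z. of_real (lam * alpha) * (exp z - 1)) holomorphic_on ball (of_real (-1/4)) (1/4)"
    by (intro holomorphic_intros)
qed simp

lemma elu_curvature:
  assumes nonzero: "lam * alpha \<noteq> 0"
  shows "elu lam alpha (-1/4) \<noteq> 0" and "(deriv ^^ 2) (elu lam alpha) (-1/4) \<noteq> 0"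
    and "(deriv (elu lam alpha) (-1/4))\<^sup>2
      + elu lam alpha (-1/4) * (deriv ^^ 2) (elu lam alpha) (-1/4) > 0"
proof -
  define k where "k = lam * alpha"
  define e where "e = exp (-1/4::real)"
  have deriv: "deriv (elu lam alpha) x = k * exp x" if "x < 0" for x
    unfolding k_def using has_real_derivative_elu_neg[OF that] by (rule DERIV_imp_deriv)
  have "(deriv ^^ 2) (elu lam alpha) (-1/4) = deriv (\<lambda>x. k * exp x) (-1/4)"
    unfolding deriv_funpow_two
  proof (rule deriv_cong_ev)
    have "\<forall>\<^sub>F x in nhds (-1/4::real). x < 0"
      by (intro eventually_nhds_in_open[of "{..<0}", simplified]) auto
    then show "\<forall>\<^sub>F x in nhds (-1/4::real). deriv (elu lam alpha) x = k * exp x"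
      by eventually_elim (rule deriv)
  qed simp
  also have "\<dots> = k * e"
    unfolding e_def by (rule DERIV_imp_deriv) (auto intro!: derivative_eq_intros)
  finally have second: "(deriv ^^ 2) (elu lam alpha) (-1/4) = k * e" .
  have first: "deriv (elu lam alpha) (-1/4) = k * e" and val: "elu lam alpha (-1/4) = k * (e - 1)"
    by (simp_all add: deriv elu_neg k_def e_def)
  have "e < 1" "e \<ge> 3/4"
    unfolding e_def using exp_ge_add_one_self[of "-1/4::real"] by simp_all
  moreover have "k \<noteq> 0"
    using nonzero by (simp add: k_def)
  moreover have "(k * e)\<^sup>2 + k * (e - 1) * (k * e) = k\<^sup>2 * e * (2 * e - 1)"
    by (simp add: power2_eq_square algebra_simps)
  ultimately show "elu lam alpha (-1/4) \<noteq> 0" and "(deriv ^^ 2) (elu lam alpha) (-1/4) \<noteq> 0"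
    and "(deriv (elu lam alpha) (-1/4))\<^sup>2
      + elu lam alpha (-1/4) * (deriv ^^ 2) (elu lam alpha) (-1/4) > 0"
    unfolding first val second by (auto intro!: mult_pos_pos)
qed

lemma sigmoid_minus: "sigmoid (- x) = 1 / (1 + exp x)"
  by (simp add: sigmoid_def)

lemma sigmoid_pos: "sigmoid x > 0"
  by (simp add: sigmoid_def add_pos_pos)

lemma sigmoid_less_half:
  assumes "x < 0"
  shows "sigmoid x < 1/2"
proof -
  have "2 < 1 + exp (- x)"
    using assms by simp
  then have "1 / (1 + exp (- x)) < 1 / 2"
    by (intro divide_strict_left_mono) (auto intro!: add_pos_pos)
  then show ?thesis
    unfolding sigmoid_def .
qed

lemma sigmoid_mono: "x \<le> y \<Longrightarrow> sigmoid x \<le> sigmoid y"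
  unfolding sigmoid_def by (intro divide_left_mono) (auto intro!: mult_pos_pos add_pos_pos)

lemma has_real_derivative_sigmoid:
  "(sigmoid has_real_derivative sigmoid x * (1 - sigmoid x)) (at x)"
proof -
  have "1 + exp (- x) \<noteq> 0"
    using exp_gt_zero[of "- x"] by linarith
  then show ?thesis
    unfolding sigmoid_def[abs_def]
    by (auto intro!: derivative_eq_intros simp: field_simps power2_eq_square)
qed

lemma deriv_sigmoid: "deriv sigmoid = (\<lambda>x. sigmoid x * (1 - sigmoid x))"
  by (intro ext DERIV_imp_deriv has_real_derivative_sigmoid)

lemma sigmoid_product_witness:
  "\<exists>v1 v2 v3 v4 :: real. sigmoid v1 * sigmoid v4 = sigmoid v2 * sigmoid v3 \<and>
     sigmoid v1 * sigmoid ((v3 + v4) / 2) \<noteq> sigmoid v3 * sigmoid ((v1 + v2) / 2)"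
proof (rule exI[of _ 0], rule exI[of _ "- ln 9"], rule exI[of _ "- ln 9"], rule exI[of _ "- ln 49"])
  have "ln (9::real) = 2 * ln 3" "ln (49::real) = 2 * ln 7" "ln (21::real) = ln 3 + ln 7"
    using ln_realpow[of 3 2] ln_realpow[of 7 2] ln_mult[of 3 7] by simp_all
  then have midpoints: "(- ln 9 + - ln 49) / 2 = - ln (21::real)" "(0 + - ln 9) / 2 = - ln (3::real)"
    by simp_all
  have sigmoid_values: "sigmoid 0 = 1/2" "sigmoid (- ln 9) = 1/10" "sigmoid (- ln 49) = 1/50"
    "sigmoid (- ln 21) = 1/22" "sigmoid (- ln 3) = 1/4"
    by (simp_all add: sigmoid_minus sigmoid_def)
  show "sigmoid 0 * sigmoid (- ln 49) = sigmoid (- ln 9) * sigmoid (- ln 9) \<and>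
      sigmoid 0 * sigmoid ((- ln 9 + - ln 49) / 2) \<noteq> sigmoid (- ln 9) * sigmoid ((0 + - ln 9) / 2)"
    unfolding midpoints sigmoid_values by simp
qed

lemma sigmoid_second_difference: "sigmoid 0 + sigmoid (-2) - 2 * sigmoid (-1) \<noteq> 0"
proof -
  define e where "e = exp (1::real)"
  have "e > 1" "1 + e > 0" "1 + e * e > 0"
    unfolding e_def by (simp_all add: add_pos_pos)
  have "sigmoid 0 + sigmoid (-2) - 2 * sigmoid (-1) = 1/2 + 1 / (1 + e * e) - 2 / (1 + e)"
    unfolding e_def by (simp add: sigmoid_minus sigmoid_def flip: exp_add)
  also have "\<dots> = (e - 1) ^ 3 / (2 * (1 + e * e) * (1 + e))"
    using \<open>1 + e > 0\<close> \<open>1 + e * e > 0\<close> by (simp add: field_simps power3_eq_cube)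
  also have "\<dots> > 0"
    using \<open>e > 1\<close> by (intro divide_pos_pos) (auto intro!: mult_pos_pos add_pos_pos)
  finally show ?thesis
    by simp
qed

lemma convex_on_sigmoid_neg: "convex_on {..<0} sigmoid"
proof (rule convex_on_realI[where f'="\<lambda>x. sigmoid x * (1 - sigmoid x)"])
  show "sigmoid x * (1 - sigmoid x) \<le> sigmoid y * (1 - sigmoid y)"
    if "x \<in> {..<0}" "y \<in> {..<0}" "x \<le> y" for x y
  proof -
    have "(sigmoid y - sigmoid x) * (1 - sigmoid y - sigmoid x) \<ge> 0"
      using sigmoid_mono[of x y] sigmoid_less_half[of x] sigmoid_less_half[of y] that
      by (intro mult_nonneg_nonneg) auto
    then show ?thesis
      by (simp add: algebra_simps)
  qed
qed (auto intro: has_real_derivative_sigmoid)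

lemma sigmoid_holomorphic_extension: "has_holomorphic_extension_at sigmoid (-1)"
proof (rule has_holomorphic_extension_atI[where F="\<lambda>z. 1 / (1 + exp (- z))" and r=1])
  show "(\<lambda>z. 1 / (1 + exp (- z))) holomorphic_on ball (of_real (-1)) 1"
  proof (intro holomorphic_intros)
    fix z :: complex
    assume "z \<in> ball (of_real (-1)) 1"
    then have "\<bar>Im z\<bar> < 1"
      by (rule abs_Im_less_of_mem_ball)
    then have "\<bar>Im (- z)\<bar> < pi / 2"
      using pi_gt3 by simp
    then have "Re (1 + exp (- z)) > 0"
      using Re_exp_pos by (simp add: add_pos_pos)
    then show "1 + exp (- z) \<noteq> 0"
      by (metis zero_complex.sel(1) less_irrefl)
  qed
qed (simp_all add: sigmoid_def flip: exp_of_real)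

lemma sigmoid_curvature:
  shows "sigmoid (-1) \<noteq> 0" and "(deriv ^^ 2) sigmoid (-1) \<noteq> 0"
    and "(deriv sigmoid (-1))\<^sup>2 + sigmoid (-1) * (deriv ^^ 2) sigmoid (-1) > 0"
proof -
  define s where "s = sigmoid (-1)"
  have "(deriv ^^ 2) sigmoid (-1) = deriv (\<lambda>x. sigmoid x * (1 - sigmoid x)) (-1)"
    unfolding deriv_funpow_two deriv_sigmoid ..
  also have "\<dots> = s * (1 - s) * (1 - 2 * s)"
    unfolding s_def
    by (rule DERIV_imp_deriv)
      (auto intro!: derivative_eq_intros has_real_derivative_sigmoid simp: algebra_simps)
  finally have second: "(deriv ^^ 2) sigmoid (-1) = s * (1 - s) * (1 - 2 * s)" .
  have "0 < s" "s < 1/2"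
    using sigmoid_pos[of "-1"] sigmoid_less_half[of "-1"] unfolding s_def by simp_all
  then have "(deriv ^^ 2) sigmoid (-1) > 0"
    unfolding second by (intro mult_pos_pos) auto
  with \<open>0 < s\<close> show "sigmoid (-1) \<noteq> 0" and "(deriv ^^ 2) sigmoid (-1) \<noteq> 0"
    and "(deriv sigmoid (-1))\<^sup>2 + sigmoid (-1) * (deriv ^^ 2) sigmoid (-1) > 0"
    unfolding s_def by (auto intro: add_nonneg_pos)
qed

lemma tanh_of_real: "tanh (complex_of_real x) = complex_of_real (tanh x)"
  by (simp add: tanh_altdef exp_of_real flip: of_real_minus)

lemma tanh_double_real: "tanh (2 * x) = 2 * tanh x / (1 + (tanh x)\<^sup>2)" for x :: real
proof -
  have "tanh (x + x) = (tanh x + tanh x) / (1 + tanh x * tanh x)"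
    by (rule tanh_add) simp_all
  then show ?thesis
    by (simp only: mult_2 power2_eq_square)
qed

lemma has_real_derivative_tanh: "(tanh has_real_derivative 1 - (tanh x)\<^sup>2) (at x)" for x :: real
  by (auto intro!: derivative_eq_intros)

lemma deriv_tanh_real: "deriv tanh = (\<lambda>x::real. 1 - (tanh x)\<^sup>2)"
  by (intro ext DERIV_imp_deriv has_real_derivative_tanh)

lemma tanh_product_witness:
  "\<exists>v1 v2 v3 v4 :: real. tanh v1 * tanh v4 = tanh v2 * tanh v3 \<and>
     tanh v1 * tanh ((v3 + v4) / 2) \<noteq> tanh v3 * tanh ((v1 + v2) / 2)"
proof (rule exI[of _ 1], rule exI[of _ 0], rule exI[of _ 2], rule exI[of _ 0], intro conjI)
  define s t where "s = tanh (1/2::real)" and "t = tanh (1::real)"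
  have "0 < s" "s < t" "1 + s\<^sup>2 > 0" "1 + t\<^sup>2 > 0"
    unfolding s_def t_def by (simp_all add: add_pos_nonneg)
  text \<open>Equality would force t (1 + t^2) = 2 s = t (1 + s^2), i.e. t = s.\<close>
  have t: "t = 2 * s / (1 + s\<^sup>2)"
    unfolding s_def t_def using tanh_double_real[of "1/2"] by simp
  have tanh2: "tanh 2 = 2 * t / (1 + t\<^sup>2)"
    unfolding t_def using tanh_double_real[of 1] by simp
  show "tanh 1 * tanh ((2 + 0) / 2) \<noteq> tanh 2 * tanh ((1 + 0 :: real) / 2)"
  proof
    assume "tanh 1 * tanh ((2 + 0) / 2) = tanh 2 * tanh ((1 + 0 :: real) / 2)"
    then have "t * t = 2 * t / (1 + t\<^sup>2) * s"
      by (simp add: tanh2 s_def t_def)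
    with \<open>1 + t\<^sup>2 > 0\<close> have "t * (t * (1 + t\<^sup>2)) = t * (2 * s)"
      by (simp add: field_simps)
    with \<open>0 < s\<close> \<open>s < t\<close> have "t * (1 + t\<^sup>2) = 2 * s"
      by simp
    moreover have "t * (1 + s\<^sup>2) = 2 * s"
      using t \<open>1 + s\<^sup>2 > 0\<close> by (simp add: field_simps)
    ultimately have "t * (1 + t\<^sup>2) = t * (1 + s\<^sup>2)"
      by simp
    then have "t\<^sup>2 = s\<^sup>2"
      using \<open>0 < s\<close> \<open>s < t\<close> by simp
    with \<open>0 < s\<close> \<open>s < t\<close> show False
      by (simp add: power2_eq_iff)
  qed
qed simp

lemma tanh_second_difference: "tanh 0 + tanh (-2) - 2 * tanh (-1) \<noteq> (0::real)"
proof -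
  define t where "t = tanh (1::real)"
  have "t > 0" "1 + t\<^sup>2 > 0"
    unfolding t_def by (simp_all add: add_pos_nonneg)
  have "tanh 0 + tanh (-2) - 2 * tanh (-1) = 2 * t - 2 * t / (1 + t\<^sup>2)"
    using tanh_double_real[of 1] by (simp add: t_def)
  also have "\<dots> = 2 * t ^ 3 / (1 + t\<^sup>2)"
    using \<open>1 + t\<^sup>2 > 0\<close> by (simp add: field_simps power2_eq_square power3_eq_cube)
  finally show ?thesis
    using \<open>t > 0\<close> \<open>1 + t\<^sup>2 > 0\<close> by simp
qed

lemma convex_on_tanh_neg: "convex_on {..<0} (tanh :: real \<Rightarrow> real)"
proof (rule convex_on_realI[where f'="\<lambda>x. 1 - (tanh x)\<^sup>2"])
  show "1 - (tanh x)\<^sup>2 \<le> 1 - (tanh y)\<^sup>2" if "x \<in> {..<0}" "y \<in> {..<0}" "x \<le> y" for x y :: real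
  proof -
    have "(- tanh y)\<^sup>2 \<le> (- tanh x)\<^sup>2"
      using that by (intro power_mono) auto
    then show ?thesis
      by simp
  qed
qed (auto intro: has_real_derivative_tanh)

lemma tanh_holomorphic_extension: "has_holomorphic_extension_at tanh (-1/4)"
proof (rule has_holomorphic_extension_atI[where F=tanh and r="1/4"])
  show "tanh holomorphic_on ball (of_real (-1/4)) (1/4)"
    unfolding holomorphic_on_def
  proof
    fix z :: complex
    assume "z \<in> ball (of_real (-1/4)) (1/4)"
    then have "\<bar>Im z\<bar> < 1/4"
      by (rule abs_Im_less_of_mem_ball)
    then have "\<bar>Im (z + z)\<bar> < pi / 2"
      using pi_gt3 by simp
    then have "Re (exp (z + z)) > 0"
      by (rule Re_exp_pos)
    then have "cosh z \<noteq> 0"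
      by (auto simp: cosh_zero_iff power2_eq_square simp flip: exp_add)
    then have "(tanh has_field_derivative 1 - tanh z ^ 2) (at z)"
      by (auto intro!: derivative_eq_intros)
    then show "tanh field_differentiable at z within ball (of_real (-1/4)) (1/4)"
      using field_differentiable_at_within field_differentiable_def by blast
  qed
qed (simp_all add: tanh_of_real)

lemma tanh_curvature:
  shows "tanh (-1/4::real) \<noteq> 0" and "(deriv ^^ 2) tanh (-1/4::real) \<noteq> 0"
    and "(deriv tanh (-1/4::real))\<^sup>2 + tanh (-1/4) * (deriv ^^ 2) tanh (-1/4) > 0"
proof -
  define t where "t = tanh (1/4::real)"
  have "(deriv ^^ 2) tanh (-1/4::real) = deriv (\<lambda>x::real. 1 - (tanh x)\<^sup>2) (-1/4)"
    unfolding deriv_funpow_two deriv_tanh_real ..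
  also have "\<dots> = 2 * t * (1 - t\<^sup>2)"
    unfolding t_def by (rule DERIV_imp_deriv) (auto intro!: derivative_eq_intros)
  finally have second: "(deriv ^^ 2) tanh (-1/4::real) = 2 * t * (1 - t\<^sup>2)" .
  have "t > 0"
    unfolding t_def by simp
  moreover have "t \<le> 1/3"
  proof -
    have "exp (-1/2::real) \<ge> 1/2"
      using exp_ge_add_one_self[of "-1/2::real"] by simp
    then show ?thesis
      unfolding t_def tanh_real_altdef by (simp add: divide_simps add_pos_pos)
  qed
  ultimately have "t\<^sup>2 < 1/3"
    using power_mono[of t "1/3" 2] by (simp add: power2_eq_square)
  show "tanh (-1/4::real) \<noteq> 0"
    by simp
  show "(deriv ^^ 2) tanh (-1/4::real) \<noteq> 0"
    unfolding second using \<open>t > 0\<close> \<open>t\<^sup>2 < 1/3\<close> by simp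
  have "(deriv tanh (-1/4::real))\<^sup>2 + tanh (-1/4) * (deriv ^^ 2) tanh (-1/4)
      = (1 - t\<^sup>2) * (1 - 3 * t\<^sup>2)"
    unfolding second deriv_tanh_real t_def by (simp add: power2_eq_square algebra_simps)
  also have "\<dots> > 0"
    using \<open>t\<^sup>2 < 1/3\<close> by (intro mult_pos_pos) auto
  finally show "(deriv tanh (-1/4::real))\<^sup>2 + tanh (-1/4) * (deriv ^^ 2) tanh (-1/4) > 0" .
qed

theorem corollary1:
  fixes h :: "real \<Rightarrow> real"
  assumes "h = sigmoid \<or> h = tanh \<or> h = arctan \<or> h = (\<lambda>x. x\<^sup>2) \<or>
           (\<exists>alpha lam. alpha > 0 \<and> (lam = 1 \<or> lam > 1) \<and> h = elu lam alpha)"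
  shows
    "(\<exists>v1 v2 v3 v4 :: real. h v1 * h v4 = h v2 * h v3 \<and>
        h v1 * h ((v3 + v4) / 2) \<noteq> h v3 * h ((v1 + v2) / 2))
   \<and> (\<exists>v1 v2 u1 u2 :: real.
        u1 * h v1 + u2 * h v2 = 1/3 \<and>
        inf_diff_at h v1 \<and> inf_diff_at h v2 \<and>
        (\<exists>c > 0. \<forall>n \<ge> 1. \<bar>(deriv ^^ n) h v1\<bar> \<le> c ^ n * fact n \<and>
                          \<bar>(deriv ^^ n) h v2\<bar> \<le> c ^ n * fact n) \<and>
        (u1 * deriv h v1)\<^sup>2 + u1 * (deriv ^^ 2) h v1 / 3 > 0 \<and>
        (u1 * deriv h v1 * u2 * deriv h v2)\<^sup>2 <
          ((u1 * deriv h v1)\<^sup>2 + u1 * (deriv ^^ 2) h v1 / 3) *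
          ((u2 * deriv h v2)\<^sup>2 + u2 * (deriv ^^ 2) h v2 / 3))
   \<and> (\<exists>p. riskp h p = 0 \<and> (\<forall>q. riskp h p \<le> riskp h q))
   \<and> (\<exists>p. riskp h p = 1/3 \<and> (\<forall>\<^sub>F q in nhds p. riskp h p \<le> riskp h q))"
proof -
  from assms consider "h = sigmoid" | "h = tanh" | "h = arctan" | "h = (\<lambda>x. x\<^sup>2)"
    | alpha lam where "alpha > 0" "lam = 1 \<or> lam > 1" "h = elu lam alpha"
    by blast
  then show ?thesis
  proof cases
    case 1
    show ?thesis
      unfolding 1
      by (rule network_landscape[where v="-1", OF sigmoid_product_witness
            sigmoid_second_difference convex_on_sigmoid_neg sigmoid_holomorphic_extension
            sigmoid_curvature])
  next
    case 2
    show ?thesis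
      unfolding 2
      by (rule network_landscape[where v="-1/4", OF tanh_product_witness tanh_second_difference
            convex_on_tanh_neg tanh_holomorphic_extension tanh_curvature])
  next
    case 3
    show ?thesis
      unfolding 3
      by (rule network_landscape[where v="1/2", OF arctan_product_witness
            arctan_second_difference convex_on_arctan_neg arctan_holomorphic_extension
            arctan_curvature])
  next
    case 4
    show ?thesis
      unfolding 4
      by (rule network_landscape[where v=1, OF square_product_witness _
            convex_on_subset[OF convex_power2 subset_UNIV] square_holomorphic_extension
            square_curvature])
        (simp_all add: convex_real_interval)
  next
    case (5 alpha lam)
    then have nonzero: "lam \<noteq> 0" "alpha \<noteq> 0" and "lam * alpha > 0"
      by auto
    show ?thesis
      unfolding 5(3)
      by (rule network_landscape[where v="-1/4", OF elu_product_witness[OF nonzero]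
            elu_second_difference convex_on_elu_neg elu_holomorphic_extension elu_curvature])
        (use nonzero \<open>lam * alpha > 0\<close> in simp_all)
  qed
qed

end
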